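(* Let $X$ be a metric space. The following are equivalent: (1) $X$ is hereditarily Baire; (2) every Borel 1 function $f\colon X\to\mathbb R$ has (PCP).
   Context: A topological space is Baire if every nonempty open subset of it is nonmeager in it; it is hereditarily Baire if every nonempty closed subspace is Baire. $f\colon X\to\mathbb R$ is Borel 1 if $f^{-1}(V)$ is $F_\sigma$ for every open $V\subseteq\mathbb R$; it has (PCP) if for every nonempty closed $F\subseteq X$ the restriction $f|_F$ has a point of continuity. *)

theory Defs
  imports "HOL-Analysis.Analysis"
begin

definition nowhere_dense_in :: "'a topology \<Rightarrow> 'a set \<Rightarrow> bool" where
  "nowhere_dense_in X S \<longleftrightarrow> S \<subseteq> topspace X \<and> X interior_of (X closure_of S) = {}"

definition meager_in :: "'a topology \<Rightarrow> 'a set \<Rightarrow> bool" where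
  "meager_in X S \<longleftrightarrow> (countable union_of nowhere_dense_in X) S"

definition baire_space :: "'a topology \<Rightarrow> bool" where
  "baire_space X \<longleftrightarrow> (\<forall>U. openin X U \<and> U \<noteq> {} \<longrightarrow> \<not> meager_in X U)"

definition hereditarily_baire :: "'a topology \<Rightarrow> bool" where
  "hereditarily_baire X \<longleftrightarrow> (\<forall>F. closedin X F \<and> F \<noteq> {} \<longrightarrow> baire_space (subtopology X F))"

definition borel1 :: "('a::metric_space \<Rightarrow> real) \<Rightarrow> bool" where
  "borel1 f \<longleftrightarrow> (\<forall>V. open V \<longrightarrow> fsigma_in euclidean (f -` V))"

definition has_PCP :: "('a::metric_space \<Rightarrow> real) \<Rightarrow> bool" where
  "has_PCP f \<longleftrightarrow> (\<forall>F. closed F \<and> F \<noteq> {} \<longrightarrow> (\<exists>x\<in>F. continuous (at x within F) f))"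

end

theory Submission
  imports Defs
begin

text \<open>
  If every closed subspace \<open>F\<close> is Baire and \<open>f\<close> is Borel 1, cover each preimage
  \<open>f -` {p<..<q}\<close> (\<open>p, q\<close> rational) by countably many closed sets; their traces on \<open>F\<close>
  have nowhere dense boundaries in \<open>F\<close>, so some point of \<open>F\<close> avoids all these boundaries,
  and \<open>f\<close> restricted to \<open>F\<close> is continuous there.

  Conversely, if a nonempty relatively open subset \<open>U\<close> of a closed set \<open>F\<close> is meager in \<open>F\<close>,
  cover it by closed nowhere dense sets \<open>C\<^sub>0, C\<^sub>1, \<dots>\<close> of \<open>F\<close> and let \<open>f\<close> be
  \<open>1 / (n + 1)\<close> on the points of \<open>U\<close> whose first covering set is \<open>C\<^sub>n\<close>, and \<open>2\<close> off \<open>U\<close>.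
  Its level sets are \<open>F\<^sub>\<sigma>\<close>, so it is Borel 1, but its restriction to \<open>closure U\<close> is
  discontinuous everywhere: near any point of \<open>U\<close> there are points of \<open>U\<close> outside
  \<open>C\<^sub>0 \<union> \<dots> \<union> C\<^sub>m\<close>, where \<open>f\<close> is smaller.
\<close>

lemma nowhere_dense_in_closedin_diff_interior:
  assumes "closedin Y A"
  shows "nowhere_dense_in Y (A - Y interior_of A)"
proof -
  have "closedin Y (A - Y interior_of A)"
    using assms by (simp add: closedin_diff)
  moreover have "Y interior_of (A - Y interior_of A) = {}"
    using interior_of_mono[of "A - Y interior_of A" A Y] interior_of_subset[of Y "A - Y interior_of A"]
    by auto
  ultimately show ?thesis
    by (simp add: nowhere_dense_in_def closure_of_closedin closedin_subset)
qed

lemma baire_space_point_outside_boundaries: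
  assumes "baire_space Y" "topspace Y \<noteq> {}" "countable \<A>" "\<And>A. A \<in> \<A> \<Longrightarrow> closedin Y A"
  obtains x where "x \<in> topspace Y" "\<And>A. A \<in> \<A> \<Longrightarrow> x \<in> A \<Longrightarrow> x \<in> Y interior_of A"
proof -
  define \<B> where "\<B> = (\<lambda>A. A - Y interior_of A) ` \<A>"
  have nd: "nowhere_dense_in Y B" if "B \<in> \<B>" for B
    using that assms(4) nowhere_dense_in_closedin_diff_interior by (auto simp: \<B>_def)
  then have "meager_in Y (\<Union>\<B>)"
    unfolding meager_in_def union_of_def using assms(3)
    by (intro exI[of _ \<B>]) (auto simp: \<B>_def)
  then have "\<Union>\<B> \<noteq> topspace Y"
    using assms(1,2) openin_topspace unfolding baire_space_def by metis
  moreover have "\<Union>\<B> \<subseteq> topspace Y"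
    using nd by (auto simp: nowhere_dense_in_def)
  ultimately obtain x where "x \<in> topspace Y" "x \<notin> \<Union>\<B>"
    by blast
  then show thesis
    using that by (auto simp: \<B>_def)
qed

lemma continuous_within_rat_intervalsI:
  fixes f :: "'a::t2_space \<Rightarrow> real"
  assumes "\<And>p q. of_rat p < f x \<Longrightarrow> f x < of_rat q \<Longrightarrow>
             \<exists>T. open T \<and> x \<in> T \<and> (\<forall>y \<in> T \<inter> F. of_rat p < f y \<and> f y < of_rat q)"
  shows "continuous (at x within F) f"
proof -
  obtain p q where pq: "of_rat p < f x" "f x < of_rat q"
    using of_rat_dense[of "f x - 1" "f x"] of_rat_dense[of "f x" "f x + 1"] by auto
  show ?thesis
    unfolding continuous_within
  proof (rule order_tendstoI)
    fix a
    assume "a < f x"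
    then obtain p' where "a < of_rat p'" "of_rat p' < f x"
      using of_rat_dense by blast
    then obtain T where "open T" "x \<in> T" "\<forall>y \<in> T \<inter> F. of_rat p' < f y"
      using assms[of p' q] pq by auto
    with \<open>a < of_rat p'\<close> show "eventually (\<lambda>y. a < f y) (at x within F)"
      unfolding eventually_at_topological by (intro exI[of _ T]) (auto intro: less_trans)
  next
    fix a
    assume "f x < a"
    then obtain q' where "f x < of_rat q'" "of_rat q' < a"
      using of_rat_dense by blast
    then obtain T where "open T" "x \<in> T" "\<forall>y \<in> T \<inter> F. f y < of_rat q'"
      using assms[of p q'] pq by auto
    with \<open>of_rat q' < a\<close> show "eventually (\<lambda>y. f y < a) (at x within F)"
      unfolding eventually_at_topological by (intro exI[of _ T]) (auto intro: less_trans)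
  qed
qed

lemma continuous_within_outside_boundaries:
  fixes f :: "'a::t2_space \<Rightarrow> real"
  assumes cover: "\<And>p q. \<Union>(C p q) = f -` {of_rat p<..<of_rat q}"
    and x: "\<And>p q c. c \<in> C p q \<Longrightarrow> x \<in> c \<Longrightarrow> x \<in> top_of_set F interior_of (F \<inter> c)"
  shows "continuous (at x within F) f"
proof (rule continuous_within_rat_intervalsI)
  fix p q
  assume "of_rat p < f x" "f x < of_rat q"
  then have "x \<in> \<Union>(C p q)"
    using cover by simp
  then obtain c where c: "c \<in> C p q" "x \<in> c"
    by blast
  obtain T where T: "open T" "top_of_set F interior_of (F \<inter> c) = F \<inter> T"
    using openin_interior_of[of "top_of_set F" "F \<inter> c"] unfolding openin_open by blast
  have "x \<in> T"
    using x[OF c] T(2) by blast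
  moreover have "F \<inter> T \<subseteq> c"
    using interior_of_subset[of "top_of_set F" "F \<inter> c"] T(2) by auto
  then have "F \<inter> T \<subseteq> f -` {of_rat p<..<of_rat q}"
    using c(1) cover[of p q] by blast
  ultimately show "\<exists>T. open T \<and> x \<in> T \<and> (\<forall>y \<in> T \<inter> F. of_rat p < f y \<and> f y < of_rat q)"
    using T(1) by (intro exI[of _ T]) auto
qed

lemma borel1_preimage_closed_cover:
  assumes "borel1 f" "open V"
  shows "\<exists>\<C>. countable \<C> \<and> (\<forall>c\<in>\<C>. closed c) \<and> \<Union>\<C> = f -` V"
proof -
  have "fsigma_in euclidean (f -` V)"
    using assms unfolding borel1_def by blast
  then show ?thesis
    unfolding fsigma_in_def union_of_def by (fastforce simp: subset_iff)
qed

lemma has_PCP_if_hereditarily_baire: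
  fixes f :: "'a::metric_space \<Rightarrow> real"
  assumes "hereditarily_baire (euclidean :: 'a topology)" "borel1 f"
  shows "has_PCP f"
  unfolding has_PCP_def
proof (intro allI impI)
  fix F :: "'a set"
  assume F: "closed F \<and> F \<noteq> {}"
  define Y where "Y = top_of_set F"
  have "baire_space Y"
    using assms(1) F by (simp add: hereditarily_baire_def Y_def)
  have "\<forall>p q. \<exists>\<C>. countable \<C> \<and> (\<forall>c \<in> \<C>. closed c) \<and> \<Union>\<C> = f -` {of_rat p<..<of_rat q}"
    by (intro allI borel1_preimage_closed_cover[OF assms(2) open_greaterThanLessThan])
  then obtain C where C: "\<forall>p q. countable (C p q) \<and> (\<forall>c \<in> C p q. closed c) \<and>
                                 \<Union>(C p q) = f -` {of_rat p<..<of_rat q}"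
    by metis
  define \<A> where "\<A> = (\<Union>p q. (\<lambda>c. F \<inter> c) ` C p q)"
  have "countable \<A>"
    using C by (simp add: \<A>_def)
  moreover have "closedin Y A" if A: "A \<in> \<A>" for A
  proof -
    obtain p q c where "c \<in> C p q" "A = F \<inter> c"
      using A by (auto simp: \<A>_def)
    then show ?thesis
      using C by (simp add: Y_def closedin_subtopology_Int_closed)
  qed
  moreover have "topspace Y = F"
    by (simp add: Y_def)
  ultimately obtain x where x: "x \<in> F" "\<And>A. A \<in> \<A> \<Longrightarrow> x \<in> A \<Longrightarrow> x \<in> Y interior_of A"
    using baire_space_point_outside_boundaries[OF \<open>baire_space Y\<close>, of \<A>] F by auto
  have "continuous (at x within F) f"
  proof (rule continuous_within_outside_boundaries)
    show "\<Union>(C p q) = f -` {of_rat p<..<of_rat q}" for p q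
      using C by simp
    show "x \<in> top_of_set F interior_of (F \<inter> c)" if "c \<in> C p q" "x \<in> c" for p q c
      using that x by (auto simp: \<A>_def Y_def)
  qed
  with x(1) show "\<exists>x\<in>F. continuous (at x within F) f"
    by blast
qed

lemma meager_in_closed_nowhere_dense_cover:
  assumes "meager_in Y S"
  obtains C :: "nat \<Rightarrow> 'a set"
  where "\<And>n. closedin Y (C n)" "\<And>n. Y interior_of C n = {}" "S \<subseteq> \<Union>(range C)"
proof -
  have "nowhere_dense_in Y {}"
    by (simp add: nowhere_dense_in_def)
  then obtain N :: "nat \<Rightarrow> 'a set" where N: "\<And>n. nowhere_dense_in Y (N n)" "\<Union>(range N) = S"
    using assms countable_union_of_explicit unfolding meager_in_def by metis
  have "N n \<subseteq> Y closure_of N n" for n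
    using N(1)[of n] by (simp add: nowhere_dense_in_def closure_of_subset)
  then have "S \<subseteq> \<Union>(range (\<lambda>n. Y closure_of N n))"
    using N(2) by blast
  with N(1) show thesis
    using that[of "\<lambda>n. Y closure_of N n"] by (simp add: nowhere_dense_in_def)
qed

lemma openin_diff_closed_empty_interior_nonempty:
  fixes C :: "nat \<Rightarrow> 'a set"
  assumes "openin Y Q" "Q \<noteq> {}" "\<And>i. closedin Y (C i)" "\<And>i. Y interior_of C i = {}"
  shows "Q - \<Union>(C ` {..<k}) \<noteq> {}"
proof (induction k)
  case 0
  then show ?case using assms(2) by simp
next
  case (Suc k)
  define W where "W = Q - \<Union>(C ` {..<k})"
  have "openin Y W"
    unfolding W_def using assms(1,3) by (intro openin_diff closedin_Union) auto
  moreover have "Q - \<Union>(C ` {..<Suc k}) = W - C k"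
    by (auto simp: W_def lessThan_Suc)
  ultimately show ?case
    using Suc.IH interior_of_maximal[of W "C k" Y] assms(4)[of k] by (auto simp: W_def)
qed

lemma openin_closed_fsigma_gdelta:
  fixes U :: "'a::metric_space set"
  assumes "closed F" "openin (top_of_set F) U"
  shows "fsigma_in euclidean U" "gdelta_in euclidean U"
proof -
  obtain G where G: "open G" "U = G \<inter> F"
    using assms(2) by (auto simp: openin_open)
  show "fsigma_in euclidean U"
    unfolding G(2) using G(1) assms(1)
    by (intro fsigma_in_Int open_imp_fsigma_in closed_imp_fsigma_in metrizable_space_euclidean) auto
  show "gdelta_in euclidean U"
    unfolding G(2) using G(1) assms(1)
    by (intro gdelta_in_Int open_imp_gdelta_in closed_imp_gdelta_in metrizable_space_euclidean) auto
qed

definition first_index :: "(nat \<Rightarrow> 'a set) \<Rightarrow> 'a \<Rightarrow> nat" where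
  "first_index C x = (LEAST n. x \<in> C n)"

lemma first_index_mem: "x \<in> C n \<Longrightarrow> x \<in> C (first_index C x)"
  unfolding first_index_def by (rule LeastI)

lemma not_mem_less_first_index: "i < first_index C x \<Longrightarrow> x \<notin> C i"
  unfolding first_index_def by (rule not_less_Least)

lemma first_index_eqI: "x \<in> C n \<Longrightarrow> (\<And>i. i < n \<Longrightarrow> x \<notin> C i) \<Longrightarrow> first_index C x = n"
  unfolding first_index_def by (metis Least_equality not_le)

definition rank_fun :: "(nat \<Rightarrow> 'a set) \<Rightarrow> 'a set \<Rightarrow> 'a \<Rightarrow> real" where
  "rank_fun C U x = (if x \<in> U then 1 / (real (first_index C x) + 1) else 2)"

lemma borel1_rank_fun:
  fixes U :: "'a::metric_space set"
  assumes "\<And>n. closed (C n)" "U \<subseteq> \<Union>(range C)" "fsigma_in euclidean U" "gdelta_in euclidean U"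
  shows "borel1 (rank_fun C U)"
  unfolding borel1_def
proof (intro allI impI)
  fix V :: "real set"
  define L where "L n = U \<inter> C n - \<Union>(C ` {..<n})" for n
  have L: "x \<in> L n \<longleftrightarrow> x \<in> U \<and> first_index C x = n" for x n
  proof
    assume "x \<in> L n"
    then show "x \<in> U \<and> first_index C x = n"
      by (auto simp: L_def intro!: first_index_eqI)
  next
    assume x: "x \<in> U \<and> first_index C x = n"
    then obtain m where "x \<in> C m"
      using assms(2) by blast
    then have "x \<in> C (first_index C x)"
      by (rule first_index_mem)
    moreover have "x \<notin> C i" if "i < first_index C x" for i
      using that by (rule not_mem_less_first_index)
    ultimately show "x \<in> L n"
      using x by (auto simp: L_def)
  qed
  have "rank_fun C U -` V =
        (if 2 \<in> V then - U else {}) \<union> (\<Union>n \<in> {n. 1 / (real n + 1) \<in> V}. L n)"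
    by (auto simp: rank_fun_def L split: if_splits)
  moreover have "fsigma_in euclidean (- U)"
    using assms(4) by (simp add: gdelta_in_fsigma_in Compl_eq_Diff_UNIV)
  moreover have "fsigma_in euclidean (L n)" for n
  proof -
    have "fsigma_in euclidean (U \<inter> C n)"
      using assms(1,3) by (simp add: fsigma_in_Int closed_imp_fsigma_in)
    moreover have "gdelta_in euclidean (\<Union>(C ` {..<n}))"
      using assms(1) by (simp add: closed_imp_gdelta_in metrizable_space_euclidean closed_UN)
    ultimately show ?thesis
      by (simp add: L_def fsigma_in_diff)
  qed
  ultimately show "fsigma_in euclidean (rank_fun C U -` V)"
    by (auto intro!: fsigma_in_Un fsigma_in_Union)
qed

lemma rank_fun_smaller_nearby:
  assumes "U \<subseteq> \<Union>(range C)" "x \<in> closure U"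
    and residual: "\<And>T k. open T \<Longrightarrow> U \<inter> T \<noteq> {} \<Longrightarrow> \<not> U \<inter> T \<subseteq> \<Union>(C ` {..<k})"
  obtains c where "c < rank_fun C U x"
    "\<And>T. open T \<Longrightarrow> x \<in> T \<Longrightarrow> \<exists>y \<in> U \<inter> T. rank_fun C U y \<le> c"
proof (cases "x \<in> U")
  case False
  have "\<exists>y \<in> U \<inter> T. rank_fun C U y \<le> 1" if "open T" "x \<in> T" for T
    using that assms(2) open_Int_closure_eq_empty[of T U] by (fastforce simp: rank_fun_def)
  with False show thesis
    using that[of 1] by (simp add: rank_fun_def)
next
  case True
  define m where "m = first_index C x"
  have "\<exists>y \<in> U \<inter> T. rank_fun C U y \<le> 1 / (real m + 2)" if "open T" "x \<in> T" for T
  proof -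
    obtain y where y: "y \<in> U \<inter> T" "y \<notin> \<Union>(C ` {..<Suc m})"
      using residual[OF \<open>open T\<close>, of "Suc m"] \<open>x \<in> T\<close> True by blast
    then obtain n where "y \<in> C n"
      using assms(1) by blast
    then have "y \<in> C (first_index C y)"
      by (rule first_index_mem)
    then have "m < first_index C y"
    proof (rule contrapos_pp)
      assume "\<not> m < first_index C y"
      then show "y \<notin> C (first_index C y)"
        using y(2) by (simp add: not_less_eq)
    qed
    then have "rank_fun C U y \<le> 1 / (real m + 2)"
      using y by (auto simp: rank_fun_def intro!: frac_le)
    with y show ?thesis
      by blast
  qed
  moreover have "1 / (real m + 2) < rank_fun C U x"
    using True by (simp add: rank_fun_def m_def frac_less2)
  ultimately show thesis
    using that by blast
qed

lemma not_continuous_within_values_below: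
  fixes f :: "'a::t2_space \<Rightarrow> 'b::linorder_topology"
  assumes "c < f x" "\<And>T. open T \<Longrightarrow> x \<in> T \<Longrightarrow> \<exists>y \<in> S \<inter> T. f y \<le> c"
  shows "\<not> continuous (at x within S) f"
proof
  assume "continuous (at x within S) f"
  then have "eventually (\<lambda>y. c < f y) (at x within S)"
    using assms(1) by (simp add: continuous_within order_tendstoD(1))
  then obtain T where "open T" "x \<in> T" "\<forall>y \<in> T. y \<in> S \<longrightarrow> y \<noteq> x \<longrightarrow> c < f y"
    by (auto simp: eventually_at_topological)
  with assms show False
    by (metis IntE linorder_not_le)
qed

lemma not_hereditarily_baire_imp_ex_borel1_not_PCP:
  assumes "\<not> hereditarily_baire (euclidean :: 'a::metric_space topology)"
  shows "\<exists>f :: 'a \<Rightarrow> real. borel1 f \<and> \<not> has_PCP f"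
proof -
  obtain F :: "'a set" where "closedin euclidean F" and "\<not> baire_space (top_of_set F)"
    using assms unfolding hereditarily_baire_def by blast
  then obtain U where F: "closed F" and U: "openin (top_of_set F) U" "U \<noteq> {}"
    and M: "meager_in (top_of_set F) U"
    unfolding baire_space_def by auto
  obtain C :: "nat \<Rightarrow> 'a set" where C: "\<And>n. closedin (top_of_set F) (C n)"
    "\<And>n. top_of_set F interior_of C n = {}" "U \<subseteq> \<Union>(range C)"
    using meager_in_closed_nowhere_dense_cover[OF M] by blast
  have "closed (C n)" for n
    using C(1) F by (rule closedin_closed_trans)
  then have "borel1 (rank_fun C U)"
    using C(3) openin_closed_fsigma_gdelta[OF F U(1)] by (rule borel1_rank_fun)
  have residual: "\<not> U \<inter> T \<subseteq> \<Union>(C ` {..<k})" if "open T" "U \<inter> T \<noteq> {}" for T k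
  proof -
    have "U \<inter> T - \<Union>(C ` {..<k}) \<noteq> {}"
      using openin_Int_open[OF U(1) \<open>open T\<close>] that(2) C(1,2)
      by (rule openin_diff_closed_empty_interior_nonempty)
    then show ?thesis
      by blast
  qed
  have "\<not> continuous (at x within closure U) (rank_fun C U)" if x: "x \<in> closure U" for x
  proof -
    obtain c where c: "c < rank_fun C U x"
      "\<And>T. open T \<Longrightarrow> x \<in> T \<Longrightarrow> \<exists>y \<in> U \<inter> T. rank_fun C U y \<le> c"
      using rank_fun_smaller_nearby[OF C(3) x residual] by blast
    have "\<exists>y \<in> closure U \<inter> T. rank_fun C U y \<le> c" if "open T" "x \<in> T" for T
      using c(2)[OF that] closure_subset by blast
    with c(1) show ?thesis
      by (rule not_continuous_within_values_below)
  qed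
  moreover have "closed (closure U)" "closure U \<noteq> {}"
    using U(2) by auto
  ultimately have "\<not> has_PCP (rank_fun C U)"
    unfolding has_PCP_def by blast
  with \<open>borel1 (rank_fun C U)\<close> show ?thesis
    by blast
qed

theorem corollary2p10:
  shows "hereditarily_baire (euclidean :: 'a::metric_space topology) \<longleftrightarrow>
         (\<forall>f :: 'a \<Rightarrow> real. borel1 f \<longrightarrow> has_PCP f)"
  using has_PCP_if_hereditarily_baire not_hereditarily_baire_imp_ex_borel1_not_PCP by blast

end
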